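(* Let $X=[0,1]$ with the Euclidean metric, $T(x)=2x \bmod 1$, and $\mu$ Lebesgue measure. Let $(r_n)_n$ be a decreasing sequence of positive numbers such that \[ \sum_{n=0}^\infty \frac{1}{2^{2n} r_{2^n}}<\infty. \] Then $(\mu\times\mu)(\liminf_n E_{n,r_n}^T)=1$.
   Context: For $n\in\mathbb{N}$ and $r>0$, $E_{n,r}^{T}:=\{(x,y)\in X\times X : |T^i x- T^j y|<r \text{ for some } 0\le i,j<n\}$; $E_{n,r_n}^T$ is this set with $r=r_n$. *)

theory Defs
  imports "HOL-Analysis.Analysis"
begin

definition doubling :: "real \<Rightarrow> real" where
  "doubling x = frac (2 * x)"

definition E_set :: "(real \<Rightarrow> real) \<Rightarrow> nat \<Rightarrow> real \<Rightarrow> (real \<times> real) set" where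
  "E_set T n r = {(x, y). x \<in> {0..1} \<and> y \<in> {0..1} \<and>
      (\<exists>i<n. \<exists>j<n. \<bar>(T ^^ i) x - (T ^^ j) y\<bar> < r)}"

definition mu :: "real measure" where
  "mu = restrict_space lborel {0..1}"

end

theory Submission
  imports Defs "HOL-Probability.Probability_Measure"
begin

text \<open>
  Put \<open>p = \<lfloor>2^(N+l) x\<rfloor>\<close> and \<open>q = \<lfloor>2^(N+l) y\<rfloor>\<close>. For \<open>i < N\<close> the first \<open>l\<close> binary digits of
  \<open>T\<^sup>i x\<close> form a block of \<open>l\<close> consecutive bits of \<open>p\<close>, and if the blocks of \<open>T\<^sup>i x\<close> and \<open>T\<^sup>j y\<close>
  coincide then \<open>|T\<^sup>i x - T\<^sup>j y| < 2^-l\<close>. For uniformly random \<open>p, q\<close> the number \<open>S\<close> of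
  coinciding pairs of blocks has mean \<open>N\<^sup>2/2^l\<close>; two blocks of \<open>p\<close> at distance \<open>d\<close> share only
  \<open>l - d\<close> bits, so the second moment of \<open>S\<close> is at most \<open>N\<^sup>4/4^l + 64 N\<^sup>2/2^l\<close>. The
  second-moment method then bounds the proportion of pairs \<open>(p, q)\<close> without a coincidence by
  \<open>64 \<cdot> 2^l / N\<^sup>2\<close>. Choosing \<open>N = 2^k\<close> and \<open>2^-l \<approx> r (2^(k+1))\<close>, the hypothesis makes these
  bounds summable, and Borel--Cantelli gives the theorem.
\<close>

section \<open>Counting bit windows\<close>

definition bit_window :: "nat \<Rightarrow> nat \<Rightarrow> nat \<Rightarrow> nat" where
  "bit_window t m p = p div 2^t mod 2^m"

lemma bit_window_less: "bit_window t m p < 2^m"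
  by (simp add: bit_window_def)

lemma bit_window_add: "bit_window t (d + m) p = bit_window t d p + 2^d * bit_window (t + d) m p"
  unfolding bit_window_def by (simp add: power_add mod_mult2_eq div_mult2_eq)

lemma bit_window_mod: "d \<le> m \<Longrightarrow> bit_window t d p = bit_window t m p mod 2^d"
  unfolding bit_window_def by (simp add: mod_mod_cancel le_imp_power_dvd)

lemma card_div_fiber:
  fixes a b :: nat
  assumes "a > 0"
  shows "card {p. p < a * b \<and> P (p div a)} = a * card {u. u < b \<and> P u}"
proof -
  let ?f = "\<lambda>(u, s). a * u + s"
  have "{p. p < a * b \<and> P (p div a)} = ?f ` ({u. u < b \<and> P u} \<times> {..<a})"
  proof (intro set_eqI iffI)
    fix p assume "p \<in> {p. p < a * b \<and> P (p div a)}"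
    then have p: "p < a * b" "P (p div a)" by auto
    then have "p div a < b" using assms by (simp add: div_less_iff_less_mult mult.commute)
    with p assms show "p \<in> ?f ` ({u. u < b \<and> P u} \<times> {..<a})"
      by (intro image_eqI[of _ _ "(p div a, p mod a)"]) auto
  next
    fix p assume "p \<in> ?f ` ({u. u < b \<and> P u} \<times> {..<a})"
    then obtain u s where us: "p = a * u + s" "u < b" "P u" "s < a" by auto
    have "a * u + s < a * (u + 1)" using us by simp
    also have "\<dots> \<le> a * b" using us by (intro mult_le_mono2) simp
    finally show "p \<in> {p. p < a * b \<and> P (p div a)}" using us assms by simp
  qed
  moreover have "inj_on ?f ({u. u < b \<and> P u} \<times> {..<a})"
  proof (rule inj_onI, clarsimp)
    fix u s u' s' assume us: "s < a" "s' < a" "a * u + s = a * u' + s'"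
    have "(a * u + s) div a = u" "(a * u' + s') div a = u'" using us(1,2) by simp_all
    with us(3) have "u = u'" by metis
    with us(3) show "u = u' \<and> s = s'" by simp
  qed
  ultimately show ?thesis by (simp add: card_image card_cartesian_product)
qed

lemma card_mod_fiber:
  fixes m c v :: nat
  assumes "v < m"
  shows "card {u. u < m * c \<and> u mod m = v} = c"
proof -
  have "{u. u < m * c \<and> u mod m = v} = (\<lambda>k. v + m * k) ` {..<c}"
  proof (intro set_eqI iffI)
    fix u assume "u \<in> {u. u < m * c \<and> u mod m = v}"
    then have u: "u < m * c" "u mod m = v" by auto
    then have "u = v + m * (u div m)" by (metis mod_mult_div_eq add.commute mult.commute)
    moreover have "u div m < c" using u assms by (simp add: div_less_iff_less_mult mult.commute)
    ultimately show "u \<in> (\<lambda>k. v + m * k) ` {..<c}" by blast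
  next
    fix u assume "u \<in> (\<lambda>k. v + m * k) ` {..<c}"
    then obtain k where k: "u = v + m * k" "k < c" by auto
    have "v + m * k < m * (k + 1)" using assms by simp
    also have "\<dots> \<le> m * c" using k by (intro mult_le_mono2) simp
    finally show "u \<in> {u. u < m * c \<and> u mod m = v}" using k assms by simp
  qed
  moreover have "inj_on (\<lambda>k. v + m * k) {..<c}" using assms by (intro inj_onI) simp
  ultimately show ?thesis by (simp add: card_image)
qed

lemma card_bit_window_eq:
  assumes "t + m \<le> L" "v < 2^m"
  shows "card {p. p < 2^L \<and> bit_window t m p = v} = 2^(L - m)"
proof -
  have L1: "(2::nat)^L = 2^t * 2^(L - t)" using assms by (simp add: power_add[symmetric])
  have L2: "(2::nat)^(L - t) = 2^m * 2^(L - t - m)" using assms by (simp add: power_add[symmetric])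
  have "card {p. p < 2^L \<and> bit_window t m p = v}
      = card {p. p < 2^t * 2^(L - t) \<and> p div 2^t mod 2^m = v}"
    unfolding bit_window_def L1 ..
  also have "\<dots> = 2^t * card {u. u < 2^(L - t) \<and> u mod 2^m = v}"
    by (rule card_div_fiber) simp
  also have "\<dots> = 2^t * 2^(L - t - m)" unfolding L2 using assms by (simp add: card_mod_fiber)
  also have "\<dots> = 2^(L - m)" using assms by (simp add: power_add[symmetric])
  finally show ?thesis .
qed

lemma card_bit_window_le:
  assumes "t + m \<le> L"
  shows "card {p. p < 2^L \<and> bit_window t m p = v} \<le> 2^(L - m)"
proof (cases "v < 2^m")
  case True
  then show ?thesis using card_bit_window_eq[OF assms] by simp
next
  case False
  then have "bit_window t m p \<noteq> v" for p using bit_window_less[of t m p] by simp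
  then show ?thesis by simp
qed

lemma real_two_pow_diff:
  assumes "k \<le> L"
  shows "real (2^(L - k)) = 2^L / 2^k"
proof -
  have "(2::real)^L = 2^k * 2^(L - k)" using assms by (simp flip: power_add)
  then show ?thesis by simp
qed

text \<open>Two windows of length \<open>l\<close> at distance \<open>d\<close> together cover \<open>l + min d l\<close> distinct bits.\<close>

lemma card_two_bit_windows:
  assumes "s + d + l \<le> L"
  shows "real (card {p. p < 2^L \<and> bit_window s l p = a \<and> bit_window (s + d) l p = b})
    \<le> 2^L / 2^(l + min d l)"
proof (cases "d \<le> l")
  case True
  let ?c = "a mod 2^d + 2^d * b"
  have "{p. p < 2^L \<and> bit_window s l p = a \<and> bit_window (s + d) l p = b}
      \<subseteq> {p. p < 2^L \<and> bit_window s (d + l) p = ?c}"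
    using bit_window_add[of s d l] bit_window_mod[OF True, of s] by auto
  then have "card {p. p < 2^L \<and> bit_window s l p = a \<and> bit_window (s + d) l p = b}
      \<le> card {p. p < 2^L \<and> bit_window s (d + l) p = ?c}"
    by (intro card_mono) auto
  also have "\<dots> \<le> 2^(L - (d + l))" by (rule card_bit_window_le) (use assms in simp)
  finally have "real (card {p. p < 2^L \<and> bit_window s l p = a \<and> bit_window (s + d) l p = b})
      \<le> real (2^(L - (d + l)))"
    by (simp only: of_nat_le_iff)
  also have "\<dots> = 2^L / 2^(d + l)" using assms by (intro real_two_pow_diff) simp
  finally show ?thesis using True by (simp add: add.commute)
next
  case False
  let ?c = "\<lambda>u. a + 2^l * u + 2^d * b"
  have "{p. p < 2^L \<and> bit_window s l p = a \<and> bit_window (s + d) l p = b}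
      \<subseteq> (\<Union>u<2^(d - l). {p. p < 2^L \<and> bit_window s (d + l) p = ?c u})"
  proof
    fix p assume "p \<in> {p. p < 2^L \<and> bit_window s l p = a \<and> bit_window (s + d) l p = b}"
    then have p: "p < 2^L" "bit_window s l p = a" "bit_window (s + d) l p = b" by auto
    have "bit_window s d p = a + 2^l * bit_window (s + l) (d - l) p"
      using bit_window_add[of s l "d - l" p] False p by simp
    then have "bit_window s (d + l) p = ?c (bit_window (s + l) (d - l) p)"
      using bit_window_add[of s d l p] p by simp
    then show "p \<in> (\<Union>u<2^(d - l). {p. p < 2^L \<and> bit_window s (d + l) p = ?c u})"
      using p bit_window_less by blast
  qed
  then have "card {p. p < 2^L \<and> bit_window s l p = a \<and> bit_window (s + d) l p = b}
      \<le> card (\<Union>u<2^(d - l). {p. p < 2^L \<and> bit_window s (d + l) p = ?c u})"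
    by (intro card_mono) auto
  also have "\<dots> \<le> (\<Sum>u<2^(d - l). card {p. p < 2^L \<and> bit_window s (d + l) p = ?c u})"
    by (rule card_UN_le) simp
  also have "\<dots> \<le> (\<Sum>u<(2::nat)^(d - l). 2^(L - (d + l)))"
    by (intro sum_mono card_bit_window_le) (use assms in simp)
  also have "\<dots> = 2^(L - (l + l))"
    using assms False by (simp flip: power_add)
  finally have "real (card {p. p < 2^L \<and> bit_window s l p = a \<and> bit_window (s + d) l p = b})
      \<le> real (2^(L - (l + l)))"
    by (simp only: of_nat_le_iff)
  also have "\<dots> = 2^L / 2^(l + l)" using assms False by (intro real_two_pow_diff) simp
  finally show ?thesis using False by simp
qed

section \<open>Coincidences of digit blocks\<close>

text \<open>For \<open>p = \<lfloor>2^(N+l) x\<rfloor>\<close> and \<open>i \<le> N\<close>, \<open>orbit_digits N l i p\<close> encodes the first \<open>l\<close> binary digits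
  of \<open>frac (2^i x)\<close>; see \<open>floor_frac_eq_orbit_digits\<close>.\<close>

definition orbit_digits :: "nat \<Rightarrow> nat \<Rightarrow> nat \<Rightarrow> nat \<Rightarrow> nat" where
  "orbit_digits N l i p = bit_window (N - i) l p"

definition gap :: "nat \<Rightarrow> nat \<Rightarrow> nat" where
  "gap i j = (if i \<le> j then j - i else i - j)"

definition joint_digits_count :: "nat \<Rightarrow> nat \<Rightarrow> nat \<Rightarrow> nat \<Rightarrow> nat \<Rightarrow> nat \<Rightarrow> real" where
  "joint_digits_count N l i i' a b =
    (\<Sum>p<2^(N+l). of_bool (orbit_digits N l i p = a \<and> orbit_digits N l i' p = b))"

definition match_count :: "nat \<Rightarrow> nat \<Rightarrow> nat \<Rightarrow> nat \<Rightarrow> real" where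
  "match_count N l p q = (\<Sum>i<N. \<Sum>j<N. of_bool (orbit_digits N l i p = orbit_digits N l j q))"

definition double_match_count :: "nat \<Rightarrow> nat \<Rightarrow> nat \<Rightarrow> nat \<Rightarrow> nat \<Rightarrow> nat \<Rightarrow> real" where
  "double_match_count N l i j i' j' = (\<Sum>p<2^(N+l). \<Sum>q<2^(N+l).
      of_bool (orbit_digits N l i p = orbit_digits N l j q) *
      of_bool (orbit_digits N l i' p = orbit_digits N l j' q))"

lemma orbit_digits_less: "orbit_digits N l i p < 2^l"
  by (simp add: orbit_digits_def bit_window_less)

lemma Collect_lessThan_Int: "{..<n} \<inter> {p. Q p} = {p. p < n \<and> Q p}"
  by auto

lemma sum_of_bool_eq_delta:
  fixes y :: nat and W :: "nat \<Rightarrow> real"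
  assumes "y < m"
  shows "(\<Sum>b<m. of_bool (y = b) * W b) = W y"
proof -
  have "(\<Sum>b<m. of_bool (y = b) * W b) = (\<Sum>b<m. if b = y then W y else 0)"
    by (intro sum.cong refl) auto
  then show ?thesis using assms by simp
qed

lemma sum_of_bool_eq_delta2:
  fixes x y :: nat and Z :: "nat \<Rightarrow> nat \<Rightarrow> real"
  assumes "x < n" "y < m"
  shows "(\<Sum>a<n. \<Sum>b<m. of_bool (x = a \<and> y = b) * Z a b) = Z x y"
proof -
  have "(\<Sum>b<m. of_bool (x = a \<and> y = b) * Z a b) = of_bool (x = a) * Z a y" for a
    using sum_of_bool_eq_delta[OF assms(2), of "Z a"] by (cases "x = a") simp_all
  then show ?thesis using sum_of_bool_eq_delta[OF assms(1), of "\<lambda>a. Z a y"] by simp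
qed

lemma sum_swap_nested3:
  "(\<Sum>p\<in>A. \<Sum>q\<in>B. \<Sum>a\<in>C. G p q a) = (\<Sum>a\<in>C. \<Sum>p\<in>A. \<Sum>q\<in>B. G p q a)"
proof -
  have "(\<Sum>p\<in>A. \<Sum>q\<in>B. \<Sum>a\<in>C. G p q a) = (\<Sum>p\<in>A. \<Sum>a\<in>C. \<Sum>q\<in>B. G p q a)"
    by (rule sum.cong[OF refl], rule sum.swap)
  also have "\<dots> = (\<Sum>a\<in>C. \<Sum>p\<in>A. \<Sum>q\<in>B. G p q a)" by (rule sum.swap)
  finally show ?thesis .
qed

lemma sum_swap_nested4:
  "(\<Sum>p\<in>A. \<Sum>q\<in>B. \<Sum>a\<in>C. \<Sum>b\<in>D. G p q a b) = (\<Sum>a\<in>C. \<Sum>b\<in>D. \<Sum>p\<in>A. \<Sum>q\<in>B. G p q a b)"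
proof -
  have "(\<Sum>p\<in>A. \<Sum>q\<in>B. \<Sum>a\<in>C. \<Sum>b\<in>D. G p q a b) = (\<Sum>p\<in>A. \<Sum>a\<in>C. \<Sum>q\<in>B. \<Sum>b\<in>D. G p q a b)"
    by (rule sum.cong[OF refl], rule sum.swap)
  also have "\<dots> = (\<Sum>p\<in>A. \<Sum>a\<in>C. \<Sum>b\<in>D. \<Sum>q\<in>B. G p q a b)"
    by (rule sum.cong[OF refl], rule sum.cong[OF refl], rule sum.swap)
  also have "\<dots> = (\<Sum>a\<in>C. \<Sum>p\<in>A. \<Sum>b\<in>D. \<Sum>q\<in>B. G p q a b)"
    by (rule sum.swap)
  also have "\<dots> = (\<Sum>a\<in>C. \<Sum>b\<in>D. \<Sum>p\<in>A. \<Sum>q\<in>B. G p q a b)"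
    by (rule sum.cong[OF refl], rule sum.swap)
  finally show ?thesis .
qed

lemma joint_digits_count_nonneg: "joint_digits_count N l i i' a b \<ge> 0"
  unfolding joint_digits_count_def by (intro sum_nonneg) simp

lemma joint_digits_count_le:
  assumes "i < N" "i' < N"
  shows "joint_digits_count N l i i' a b \<le> 2^(N+l) / 2^(l + min (gap i i') l)"
proof (cases "i' \<le> i")
  case True
  have "joint_digits_count N l i i' a b = real (card {p. p < 2^(N+l) \<and>
      bit_window (N - i) l p = a \<and> bit_window ((N - i) + (i - i')) l p = b})"
    unfolding joint_digits_count_def orbit_digits_def using True assms
    by (simp add: Collect_lessThan_Int)
  also have "\<dots> \<le> 2^(N+l) / 2^(l + min (i - i') l)"
    by (rule card_two_bit_windows) (use True assms in simp)
  moreover have "gap i i' = i - i'" using True by (simp add: gap_def)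
  ultimately show ?thesis by simp
next
  case False
  have "joint_digits_count N l i i' a b = real (card {p. p < 2^(N+l) \<and>
      bit_window (N - i') l p = b \<and> bit_window ((N - i') + (i' - i)) l p = a})"
    unfolding joint_digits_count_def orbit_digits_def using False assms
    by (simp add: Collect_lessThan_Int conj_commute)
  also have "\<dots> \<le> 2^(N+l) / 2^(l + min (i' - i) l)"
    by (rule card_two_bit_windows) (use False assms in simp)
  moreover have "gap i i' = i' - i" using False by (simp add: gap_def)
  ultimately show ?thesis by simp
qed

lemma sum_joint_digits_count: "(\<Sum>a<2^l. \<Sum>b<2^l. joint_digits_count N l i i' a b) = 2^(N+l)"
proof -
  have "(\<Sum>a<2^l. \<Sum>b<2^l. joint_digits_count N l i i' a b) = (\<Sum>p<2^(N+l). \<Sum>a<2^l. \<Sum>b<2^l.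
      of_bool (orbit_digits N l i p = a \<and> orbit_digits N l i' p = b) * 1)"
    unfolding joint_digits_count_def mult_1_right by (rule sum_swap_nested3)
  also have "\<dots> = (\<Sum>p<(2::nat)^(N+l). 1)"
    by (intro sum.cong refl sum_of_bool_eq_delta2 orbit_digits_less)
  finally show ?thesis by simp
qed

lemma sum_orbit_digits_eq:
  assumes "i < N" "a < 2^l"
  shows "(\<Sum>p<2^(N+l). of_bool (orbit_digits N l i p = a) :: real) = 2^(N+l) / 2^l"
proof -
  have "(\<Sum>p<2^(N+l). of_bool (orbit_digits N l i p = a) :: real)
      = real (card {p. p < 2^(N+l) \<and> bit_window (N - i) l p = a})"
    unfolding orbit_digits_def by (simp add: Collect_lessThan_Int)
  also have "\<dots> = real (2^(N + l - l))" by (subst card_bit_window_eq) (use assms in auto)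
  also have "\<dots> = 2^(N+l) / 2^l" by (rule real_two_pow_diff) simp
  finally show ?thesis .
qed

lemma double_match_count_eq:
  "double_match_count N l i j i' j' =
    (\<Sum>a<2^l. \<Sum>b<2^l. joint_digits_count N l i i' a b * joint_digits_count N l j j' a b)"
proof -
  let ?I = "\<lambda>p a b. of_bool (orbit_digits N l i p = a \<and> orbit_digits N l i' p = b) :: real"
  let ?J = "\<lambda>q a b. of_bool (orbit_digits N l j q = a \<and> orbit_digits N l j' q = b) :: real"
  have pointwise: "of_bool (orbit_digits N l i p = orbit_digits N l j q) *
      of_bool (orbit_digits N l i' p = orbit_digits N l j' q)
      = (\<Sum>a<2^l. \<Sum>b<2^l. ?I p a b * ?J q a b)" for p q
    by (subst sum_of_bool_eq_delta2[OF orbit_digits_less orbit_digits_less]) auto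
  have "double_match_count N l i j i' j'
      = (\<Sum>p<2^(N+l). \<Sum>q<2^(N+l). \<Sum>a<2^l. \<Sum>b<2^l. ?I p a b * ?J q a b)"
    unfolding double_match_count_def pointwise ..
  also have "\<dots> = (\<Sum>a<2^l. \<Sum>b<2^l. \<Sum>p<2^(N+l). \<Sum>q<2^(N+l). ?I p a b * ?J q a b)"
    by (rule sum_swap_nested4)
  also have "\<dots> = (\<Sum>a<2^l. \<Sum>b<2^l.
      joint_digits_count N l i i' a b * joint_digits_count N l j j' a b)"
    unfolding joint_digits_count_def by (simp only: sum_product)
  finally show ?thesis .
qed

lemma double_match_count_le_right:
  assumes "j < N" "j' < N"
  shows "double_match_count N l i j i' j' \<le> 2^(N+l) * (2^(N+l) / 2^(l + min (gap j j') l))"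
proof -
  have "double_match_count N l i j i' j' \<le>
      (\<Sum>a<2^l. \<Sum>b<2^l. joint_digits_count N l i i' a b * (2^(N+l) / 2^(l + min (gap j j') l)))"
    unfolding double_match_count_eq
    by (intro sum_mono mult_left_mono joint_digits_count_le assms joint_digits_count_nonneg)
  also have "\<dots> = 2^(N+l) * (2^(N+l) / 2^(l + min (gap j j') l))"
    unfolding sum_distrib_right[symmetric] sum_joint_digits_count ..
  finally show ?thesis .
qed

lemma double_match_count_le_left:
  assumes "i < N" "i' < N"
  shows "double_match_count N l i j i' j' \<le> 2^(N+l) * (2^(N+l) / 2^(l + min (gap i i') l))"
proof -
  have "double_match_count N l i j i' j' \<le>
      (\<Sum>a<2^l. \<Sum>b<2^l. (2^(N+l) / 2^(l + min (gap i i') l)) * joint_digits_count N l j j' a b)"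
    unfolding double_match_count_eq
    by (intro sum_mono mult_right_mono joint_digits_count_le assms joint_digits_count_nonneg)
  also have "\<dots> = 2^(N+l) * (2^(N+l) / 2^(l + min (gap i i') l))"
    unfolding sum_distrib_left[symmetric] sum_joint_digits_count by (rule mult.commute)
  finally show ?thesis .
qed

lemma half_pow_max_le: "(1/2::real)^(max d e) \<le> (3/4)^(d + e)"
proof -
  have "(1/2::real)^(max d e) \<le> (9/16)^(max d e)" by (intro power_mono) auto
  also have "\<dots> = (3/4)^(2 * max d e)" by (simp add: power_mult power2_eq_square)
  also have "\<dots> \<le> (3/4)^(d + e)" by (intro power_decreasing) auto
  finally show ?thesis .
qed

lemma double_match_count_le:
  assumes "i < N" "j < N" "i' < N" "j' < N"
  shows "double_match_count N l i j i' j'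
    \<le> (2^(N+l) * 2^(N+l)) * (1 / 4^l + (3/4)^(gap i i' + gap j j') / 2^l)"
proof -
  define T :: real where "T = 2^(N+l)"
  define d where "d = gap i i'"
  define e where "e = gap j j'"
  have T: "T > 0" unfolding T_def by simp
  have right: "double_match_count N l i j i' j' \<le> T * (T / 2^(l + min e l))"
    using double_match_count_le_right[OF assms(2,4)] unfolding T_def e_def .
  have left: "double_match_count N l i j i' j' \<le> T * (T / 2^(l + min d l))"
    using double_match_count_le_left[OF assms(1,3)] unfolding T_def d_def .
  have "double_match_count N l i j i' j' \<le> (T * T) * (1 / 4^l + (3/4)^(d + e) / 2^l)"
  proof (cases "d \<ge> l \<or> e \<ge> l")
    case True
    then have "double_match_count N l i j i' j' \<le> T * (T / 2^(l + l))"
      using left right by (auto simp: min_def split: if_splits)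
    also have "\<dots> = (T * T) * (1 / 4^l)" by (simp add: power_add flip: power_mult_distrib)
    also have "\<dots> \<le> (T * T) * (1 / 4^l + (3/4)^(d + e) / 2^l)"
      using T by (intro mult_left_mono) auto
    finally show ?thesis .
  next
    case False
    then have "double_match_count N l i j i' j' \<le> T * (T / 2^(l + max d e))"
      using left right by (auto simp: max_def)
    also have "\<dots> = (T * T) * ((1/2)^(max d e) / 2^l)" by (simp add: power_add power_one_over)
    also have "\<dots> \<le> (T * T) * ((3/4)^(d + e) / 2^l)"
      using T by (intro mult_left_mono divide_right_mono half_pow_max_le) auto
    also have "\<dots> \<le> (T * T) * (1 / 4^l + (3/4)^(d + e) / 2^l)"
      using T by (intro mult_left_mono) auto
    finally show ?thesis .
  qed
  then show ?thesis unfolding T_def d_def e_def .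
qed

lemma sum_three_quarters_pow_inj_le:
  fixes f :: "nat \<Rightarrow> nat"
  assumes "inj_on f A" "f ` A \<subseteq> {..<n}"
  shows "(\<Sum>a\<in>A. (3/4::real)^(f a)) \<le> 4"
proof -
  have "(\<Sum>a\<in>A. (3/4::real)^(f a)) = (\<Sum>k\<in>f ` A. (3/4::real)^k)"
    by (simp add: sum.reindex[OF assms(1)])
  also have "\<dots> \<le> (\<Sum>k<n. (3/4::real)^k)" by (intro sum_mono2 assms) auto
  also have "\<dots> = (1 - (3/4)^n) / (1 - 3/4)" by (simp add: sum_gp_strict)
  also have "\<dots> \<le> 4" by simp
  finally show ?thesis .
qed

lemma sum_three_quarters_pow_gap_le: "(\<Sum>i'<N. (3/4::real)^(gap i i')) \<le> 8"
proof -
  have "(\<Sum>i'<N. (3/4::real)^(gap i i')) \<le> (\<Sum>i'\<in>{..i} \<union> {i<..<N}. (3/4::real)^(gap i i'))"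
    by (intro sum_mono2) auto
  also have "\<dots> = (\<Sum>i'\<in>{..i}. (3/4::real)^(i - i')) + (\<Sum>i'\<in>{i<..<N}. (3/4::real)^(i' - i))"
    by (subst sum.union_disjoint) (auto simp: gap_def intro!: arg_cong2[where f = "(+)"] sum.cong)
  also have "\<dots> \<le> 4 + 4"
    by (intro add_mono sum_three_quarters_pow_inj_le[where n = "Suc i"]
        sum_three_quarters_pow_inj_le[where n = N]) (auto simp: inj_on_def)
  finally show ?thesis by simp
qed

lemma sum_match_count:
  "(\<Sum>p<2^(N+l). \<Sum>q<2^(N+l). match_count N l p q) = real N ^ 2 / 2^l * (2^(N+l) * 2^(N+l))"
proof -
  have pair: "(\<Sum>p<2^(N+l). \<Sum>q<2^(N+l). of_bool (orbit_digits N l i p = orbit_digits N l j q) :: real)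
      = 2^(N+l) * 2^(N+l) / 2^l" if "i < N" "j < N" for i j
  proof -
    have pointwise: "of_bool (orbit_digits N l i p = orbit_digits N l j q) = (\<Sum>a<2^l.
        of_bool (orbit_digits N l i p = a) * of_bool (orbit_digits N l j q = a) :: real)" for p q
      by (subst sum_of_bool_eq_delta[OF orbit_digits_less]) auto
    have "(\<Sum>p<2^(N+l). \<Sum>q<2^(N+l). of_bool (orbit_digits N l i p = orbit_digits N l j q) :: real)
        = (\<Sum>a<2^l. \<Sum>p<2^(N+l). \<Sum>q<2^(N+l).
            of_bool (orbit_digits N l i p = a) * of_bool (orbit_digits N l j q = a))"
      unfolding pointwise by (rule sum_swap_nested3)
    also have "\<dots> = (\<Sum>a<2^l. (\<Sum>p<2^(N+l). of_bool (orbit_digits N l i p = a) :: real) *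
        (\<Sum>q<2^(N+l). of_bool (orbit_digits N l j q = a)))"
      by (simp only: sum_product)
    also have "\<dots> = (\<Sum>a<(2::nat)^l. (2^(N+l) / 2^l) * (2^(N+l) / 2^l :: real))"
      by (intro sum.cong refl) (simp only: sum_orbit_digits_eq that lessThan_iff)
    also have "\<dots> = 2^(N+l) * 2^(N+l) / 2^l" by (simp add: power_add)
    finally show ?thesis .
  qed
  have "(\<Sum>p<2^(N+l). \<Sum>q<2^(N+l). match_count N l p q) = (\<Sum>i<N. \<Sum>j<N.
      \<Sum>p<2^(N+l). \<Sum>q<2^(N+l). of_bool (orbit_digits N l i p = orbit_digits N l j q) :: real)"
    unfolding match_count_def by (rule sum_swap_nested4)
  also have "\<dots> = (\<Sum>i<N. \<Sum>j<N. (2^(N+l) * 2^(N+l) / 2^l :: real))"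
    by (intro sum.cong refl pair) auto
  finally show ?thesis by (simp add: power2_eq_square)
qed

lemma sum_match_count_squared:
  "(\<Sum>p<2^(N+l). \<Sum>q<2^(N+l). (match_count N l p q)^2)
    \<le> (2^(N+l) * 2^(N+l)) * ((real N ^ 2 / 2^l)^2 + 64 * (real N ^ 2 / 2^l))"
proof -
  define T :: real where "T = 2^(N+l) * 2^(N+l)"
  define G where "G = (\<Sum>i<N. \<Sum>i'<N. (3/4::real)^(gap i i'))"
  let ?X = "\<lambda>i j p q. of_bool (orbit_digits N l i p = orbit_digits N l j q) :: real"
  have T: "T \<ge> 0" unfolding T_def by simp
  have "G \<le> (\<Sum>i<N. 8)" unfolding G_def by (intro sum_mono sum_three_quarters_pow_gap_le)
  then have G: "0 \<le> G" "G \<le> 8 * real N" unfolding G_def by (auto intro!: sum_nonneg)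
  have square_G: "G * G = (\<Sum>i<N. \<Sum>i'<N. \<Sum>j<N. \<Sum>j'<N. (3/4)^(gap i i') * (3/4)^(gap j j'))"
    unfolding G_def sum_distrib_right by (simp only: sum_distrib_left)
  have square: "(match_count N l p q)^2 = (\<Sum>i<N. \<Sum>i'<N. \<Sum>j<N. \<Sum>j'<N. ?X i j p q * ?X i' j' p q)"
    for p q unfolding match_count_def power2_eq_square sum_product ..
  have "(\<Sum>p<2^(N+l). \<Sum>q<2^(N+l). (match_count N l p q)^2)
      = (\<Sum>i<N. \<Sum>i'<N. \<Sum>p<2^(N+l). \<Sum>q<2^(N+l). \<Sum>j<N. \<Sum>j'<N. ?X i j p q * ?X i' j' p q)"
    unfolding square by (rule sum_swap_nested4)
  also have "\<dots> = (\<Sum>i<N. \<Sum>i'<N. \<Sum>j<N. \<Sum>j'<N. double_match_count N l i j i' j')"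
    unfolding double_match_count_def by (intro sum.cong refl sum_swap_nested4)
  also have "\<dots> \<le> (\<Sum>i<N. \<Sum>i'<N. \<Sum>j<N. \<Sum>j'<N.
      T / 4^l + T / 2^l * ((3/4)^(gap i i') * (3/4)^(gap j j')))"
  proof (intro sum_mono)
    fix i i' j j' assume "i \<in> {..<N}" "i' \<in> {..<N}" "j \<in> {..<N}" "j' \<in> {..<N}"
    then have "double_match_count N l i j i' j' \<le> T * (1 / 4^l + (3/4)^(gap i i' + gap j j') / 2^l)"
      unfolding T_def by (intro double_match_count_le) auto
    also have "\<dots> = T / 4^l + T / 2^l * ((3/4)^(gap i i') * (3/4)^(gap j j'))"
      by (simp add: power_add field_simps)
    finally show "double_match_count N l i j i' j'
        \<le> T / 4^l + T / 2^l * ((3/4)^(gap i i') * (3/4)^(gap j j'))" .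
  qed
  also have "\<dots> = real N ^ 4 * (T / 4^l) + T / 2^l * (G * G)"
    unfolding square_G sum.distrib sum_distrib_left[symmetric] by (simp add: power4_eq_xxxx)
  also have "\<dots> \<le> real N ^ 4 * (T / 4^l) + T / 2^l * ((8 * real N) * (8 * real N))"
    using G T by (intro add_left_mono mult_left_mono mult_mono) auto
  also have "\<dots> = T * ((real N ^ 2 / 2^l)^2 + 64 * (real N ^ 2 / 2^l))"
    by (simp add: field_simps power2_eq_square power4_eq_xxxx flip: power_mult_distrib)
  finally show ?thesis unfolding T_def .
qed

lemma card_zeros_le_second_moment:
  fixes S :: "'a \<Rightarrow> real" and E V :: real
  assumes "finite W" "E > 0"
    and "(\<Sum>w\<in>W. S w) = real (card W) * E"
    and "(\<Sum>w\<in>W. (S w)^2) \<le> real (card W) * (E^2 + V)"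
  shows "real (card {w\<in>W. S w = 0}) \<le> real (card W) * V / E^2"
proof -
  have "real (card {w\<in>W. S w = 0}) * E^2 = (\<Sum>w\<in>{w\<in>W. S w = 0}. (S w - E)^2)"
    by simp
  also have "\<dots> \<le> (\<Sum>w\<in>W. (S w - E)^2)"
    using assms(1) by (intro sum_mono2) auto
  also have "\<dots> = (\<Sum>w\<in>W. (S w)^2) - 2 * E * (\<Sum>w\<in>W. S w) + real (card W) * E^2"
    by (simp add: power2_diff sum.distrib sum_subtractf sum_distrib_left sum_distrib_right mult_ac)
  also have "\<dots> \<le> real (card W) * V"
    using assms(3,4) by (simp add: algebra_simps power2_eq_square)
  finally show ?thesis using assms(2) by (simp add: field_simps)
qed

definition unmatched_pairs :: "nat \<Rightarrow> nat \<Rightarrow> (nat \<times> nat) set" where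
  "unmatched_pairs N l = {(p, q). p < 2^(N+l) \<and> q < 2^(N+l) \<and>
    \<not> (\<exists>i<N. \<exists>j<N. orbit_digits N l i p = orbit_digits N l j q)}"

lemma unmatched_pairs_eq:
  "unmatched_pairs N l =
    {w \<in> {..<2^(N+l)} \<times> {..<2^(N+l)}. match_count N l (fst w) (snd w) = 0}"
  unfolding unmatched_pairs_def match_count_def
  by (force simp: sum_nonneg_eq_0_iff)

lemma card_unmatched_pairs_le:
  assumes "N > 0"
  shows "real (card (unmatched_pairs N l)) \<le> 64 * (2^(N+l) * 2^(N+l)) * 2^l / real N ^ 2"
proof -
  define W where "W = {..<(2::nat)^(N+l)} \<times> {..<(2::nat)^(N+l)}"
  define E :: real where "E = real N ^ 2 / 2^l"
  have card_W: "real (card W) = 2^(N+l) * 2^(N+l)" unfolding W_def by (simp add: card_cartesian_product)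
  have sum_W: "(\<Sum>w\<in>W. f (fst w) (snd w)) = (\<Sum>p<2^(N+l). \<Sum>q<2^(N+l). f p q)" for f :: "nat \<Rightarrow> nat \<Rightarrow> real"
    unfolding W_def by (simp add: sum.cartesian_product case_prod_beta')
  have "real (card (unmatched_pairs N l)) \<le> real (card W) * (64 * E) / E^2"
    unfolding unmatched_pairs_eq W_def[symmetric]
  proof (rule card_zeros_le_second_moment)
    show "finite W" "E > 0" using assms by (auto simp: W_def E_def)
    show "(\<Sum>w\<in>W. match_count N l (fst w) (snd w)) = real (card W) * E"
      unfolding sum_W sum_match_count card_W E_def by simp
    show "(\<Sum>w\<in>W. (match_count N l (fst w) (snd w))^2) \<le> real (card W) * (E^2 + 64 * E)"
      unfolding sum_W[of "\<lambda>p q. (match_count N l p q)^2"] card_W E_def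
      by (rule sum_match_count_squared)
  qed
  also have "\<dots> = 64 * (2^(N+l) * 2^(N+l)) * 2^l / real N ^ 2"
    using assms unfolding card_W E_def by (simp add: field_simps power2_eq_square)
  finally show ?thesis .
qed

section \<open>Dyadic squares without coinciding digit blocks\<close>

lemma prob_space_mu: "prob_space mu"
  unfolding mu_def by (rule prob_space_restrict_space) auto

lemma pair_sigma_finite_mu: "pair_sigma_finite mu mu"
  by (intro pair_sigma_finite.intro prob_space_imp_sigma_finite prob_space_mu)

lemma prob_space_mu_pair: "prob_space (mu \<Otimes>\<^sub>M mu)"
proof -
  interpret pair_prob_space mu mu
    by (intro pair_prob_space.intro pair_sigma_finite_mu prob_space_mu)
  show ?thesis by (rule P.prob_space_axioms)
qed

lemma space_mu: "space mu = {0..1}"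
  by (simp add: mu_def space_restrict_space)

lemma sets_mu_iff: "A \<in> sets mu \<longleftrightarrow> A \<subseteq> {0..1} \<and> A \<in> sets borel"
  unfolding mu_def by (subst sets_restrict_space_iff) auto

lemma emeasure_mu: "A \<subseteq> {0..1} \<Longrightarrow> emeasure mu A = emeasure lborel A"
  unfolding mu_def by (rule emeasure_restrict_space) auto

lemma emeasure_mu_pair_Times:
  "A \<in> sets mu \<Longrightarrow> B \<in> sets mu \<Longrightarrow> emeasure (mu \<Otimes>\<^sub>M mu) (A \<times> B) = emeasure mu A * emeasure mu B"
  by (rule sigma_finite_measure.emeasure_pair_measure_Times[OF prob_space_imp_sigma_finite[OF prob_space_mu]])

definition dyadic_interval :: "nat \<Rightarrow> nat \<Rightarrow> real set" where
  "dyadic_interval L p = {real p / 2^L ..< (real p + 1) / 2^L}"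

definition unmatched_region :: "nat \<Rightarrow> nat \<Rightarrow> (real \<times> real) set" where
  "unmatched_region N l =
    (\<Union>w\<in>unmatched_pairs N l. dyadic_interval (N+l) (fst w) \<times> dyadic_interval (N+l) (snd w))"

lemma dyadic_interval_subset:
  assumes "p < 2^L"
  shows "dyadic_interval L p \<subseteq> {0..1}"
proof -
  have "real p + 1 \<le> 2^L"
    using assms by (metis Suc_leI of_nat_Suc of_nat_le_iff of_nat_numeral of_nat_power add.commute)
  then have bounds: "(real p + 1) / 2^L \<le> 1" "0 \<le> real p / 2^L" by simp_all
  show ?thesis
  proof
    fix z assume "z \<in> dyadic_interval L p"
    then have "real p / 2^L \<le> z" "z < (real p + 1) / 2^L" by (auto simp: dyadic_interval_def)
    with bounds show "z \<in> {0..1}" unfolding atLeastAtMost_iff by linarith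
  qed
qed

lemma sets_dyadic_interval: "p < 2^L \<Longrightarrow> dyadic_interval L p \<in> sets mu"
  unfolding sets_mu_iff using dyadic_interval_subset by (auto simp: dyadic_interval_def)

lemma emeasure_dyadic_interval:
  assumes "p < 2^L"
  shows "emeasure mu (dyadic_interval L p) = ennreal (1 / 2^L)"
proof -
  have "emeasure mu (dyadic_interval L p) = emeasure lborel (dyadic_interval L p)"
    by (rule emeasure_mu[OF dyadic_interval_subset[OF assms]])
  also have "\<dots> = ennreal ((real p + 1) / 2^L - real p / 2^L)"
    unfolding dyadic_interval_def by (rule emeasure_lborel_Ico) (simp add: divide_right_mono)
  also have "(real p + 1) / 2^L - real p / 2^L = 1 / 2^L" by (simp add: field_simps)
  finally show ?thesis .
qed

lemma measure_dyadic_square: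
  assumes "p < 2^L" "q < 2^L"
  shows "measure (mu \<Otimes>\<^sub>M mu) (dyadic_interval L p \<times> dyadic_interval L q) = 1 / 2^L * (1 / 2^L)"
proof -
  have "emeasure (mu \<Otimes>\<^sub>M mu) (dyadic_interval L p \<times> dyadic_interval L q)
      = ennreal (1 / 2^L) * ennreal (1 / 2^L)"
    using assms by (simp add: emeasure_mu_pair_Times sets_dyadic_interval emeasure_dyadic_interval)
  also have "\<dots> = ennreal (1 / 2^L * (1 / 2^L))" by (rule ennreal_mult[symmetric]) simp_all
  finally show ?thesis by (simp add: measure_def)
qed

lemma unmatched_pairs_less: "w \<in> unmatched_pairs N l \<Longrightarrow> fst w < 2^(N+l) \<and> snd w < 2^(N+l)"
  unfolding unmatched_pairs_def by auto

lemma finite_unmatched_pairs: "finite (unmatched_pairs N l)"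
  by (rule finite_subset[of _ "{..<2^(N+l)} \<times> {..<2^(N+l)}"]) (auto dest: unmatched_pairs_less)

lemma sets_unmatched_region: "unmatched_region N l \<in> sets (mu \<Otimes>\<^sub>M mu)"
  unfolding unmatched_region_def
  by (intro sets.finite_UN finite_unmatched_pairs pair_measureI sets_dyadic_interval)
     (auto dest: unmatched_pairs_less)

lemma measure_unmatched_region_le:
  assumes "N > 0"
  shows "measure (mu \<Otimes>\<^sub>M mu) (unmatched_region N l) \<le> 64 * 2^l / real N ^ 2"
proof -
  interpret P: prob_space "mu \<Otimes>\<^sub>M mu" by (rule prob_space_mu_pair)
  have "measure (mu \<Otimes>\<^sub>M mu) (unmatched_region N l) \<le> (\<Sum>w\<in>unmatched_pairs N l.
      measure (mu \<Otimes>\<^sub>M mu) (dyadic_interval (N+l) (fst w) \<times> dyadic_interval (N+l) (snd w)))"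
    unfolding unmatched_region_def
    by (intro P.finite_measure_subadditive_finite finite_unmatched_pairs)
       (auto intro!: pair_measureI sets_dyadic_interval dest: unmatched_pairs_less)
  also have "\<dots> = (\<Sum>w\<in>unmatched_pairs N l. 1 / 2^(N+l) * (1 / 2^(N+l)))"
    by (intro sum.cong refl measure_dyadic_square) (auto dest: unmatched_pairs_less)
  also have "\<dots> = real (card (unmatched_pairs N l)) / (2^(N+l) * 2^(N+l))" by simp
  also have "\<dots> \<le> (64 * (2^(N+l) * 2^(N+l)) * 2^l / real N ^ 2) / (2^(N+l) * 2^(N+l))"
    by (intro divide_right_mono card_unmatched_pairs_le assms) simp
  also have "\<dots> = 64 * 2^l / real N ^ 2" by simp
  finally show ?thesis .
qed

lemma summable_measure_unmatched_region:
  fixes r :: "nat \<Rightarrow> real"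
  assumes "\<And>n. r n > 0" "summable (\<lambda>n. 1 / (2 ^ (2 * n) * r (2 ^ n)))"
    and "\<And>k. 2^(l k) \<le> 1 + 2 / r (2^(k+1))"
  shows "summable (\<lambda>k. measure (mu \<Otimes>\<^sub>M mu) (unmatched_region (2^k) (l k)))"
proof (rule summable_comparison_test')
  let ?b = "\<lambda>k. 64 * (1/4::real)^k + 512 * (1 / (2 ^ (2 * (k+1)) * r (2 ^ (k+1))))"
  show "summable ?b"
    using summable_ignore_initial_segment[OF assms(2), of 1]
    by (intro summable_add summable_mult summable_geometric) simp_all
  fix k
  have "measure (mu \<Otimes>\<^sub>M mu) (unmatched_region (2^k) (l k)) \<le> 64 * 2^(l k) / real (2^k) ^ 2"
    by (rule measure_unmatched_region_le) simp
  also have "\<dots> \<le> 64 * (1 + 2 / r (2^(k+1))) / real (2^k) ^ 2"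
    by (intro divide_right_mono mult_left_mono assms(3)) simp_all
  also have "\<dots> = ?b k"
    using assms(1)[of "2^(k+1)"]
    by (simp add: field_simps power_mult power2_eq_square power_one_over flip: power_mult_distrib)
  finally show "norm (measure (mu \<Otimes>\<^sub>M mu) (unmatched_region (2^k) (l k))) \<le> ?b k" by simp
qed

section \<open>Orbits of the doubling map\<close>

lemma doubling_funpow_Suc: "(doubling ^^ Suc i) x = frac (2^Suc i * x)"
proof (induction i)
  case 0
  then show ?case by (simp add: doubling_def)
next
  case (Suc i)
  have "(doubling ^^ Suc (Suc i)) x = doubling ((doubling ^^ Suc i) x)" by simp
  also have "\<dots> = frac (2 * frac (2^Suc i * x))" unfolding Suc.IH doubling_def ..
  also have "2 * frac (2^Suc i * x) = 2^Suc (Suc i) * x + of_int (- 2 * \<lfloor>2^Suc i * x\<rfloor>)"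
    by (simp add: frac_def)
  also have "frac \<dots> = frac (2^Suc (Suc i) * x)"
    by (rule frac_add_of_int_right)
  finally show ?case .
qed

lemma doubling_funpow_eq: "(doubling ^^ i) = (\<lambda>x. if i = 0 then x else frac (2^i * x))"
  by (rule ext, cases i) (simp_all only: doubling_funpow_Suc, simp_all)

lemma doubling_funpow: "x \<in> {0..<1} \<Longrightarrow> (doubling ^^ i) x = frac (2^i * x)"
  by (simp add: doubling_funpow_eq)

lemma doubling_funpow_measurable[measurable]: "(doubling ^^ i) \<in> borel_measurable mu"
proof -
  have "(\<lambda>x::real. frac (2^i * x)) \<in> borel_measurable borel"
    unfolding frac_def by measurable
  then show ?thesis
    unfolding doubling_funpow_eq mu_def by (cases "i = 0") (auto intro: measurable_restrict_space1)
qed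

lemma sets_E_set_doubling: "E_set doubling n r \<in> sets (mu \<Otimes>\<^sub>M mu)"
proof -
  have "E_set doubling n r = (\<Union>i<n. \<Union>j<n. {z \<in> space (mu \<Otimes>\<^sub>M mu).
      \<bar>(doubling ^^ i) (fst z) - (doubling ^^ j) (snd z)\<bar> < r})"
    unfolding E_set_def by (auto simp: space_pair_measure space_mu; blast)
  also have "\<dots> \<in> sets (mu \<Otimes>\<^sub>M mu)"
    by (intro sets.finite_UN finite_lessThan) measurable
  finally show ?thesis .
qed

lemma floor_frac_eq_orbit_digits:
  fixes x :: real
  assumes "x \<ge> 0" "i \<le> N"
  shows "\<lfloor>2^l * frac (2^i * x)\<rfloor> = int (orbit_digits N l i (nat \<lfloor>2^(N+l) * x\<rfloor>))"
proof -
  define F where "F = \<lfloor>2^(N+l) * x\<rfloor>"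
  define G where "G = \<lfloor>2^(i+l) * x\<rfloor>"
  have "(2::real)^(N+l) = 2^(i+l) * 2^(N-i)" using assms by (simp flip: power_add)
  then have "2^(i+l) * x = (2^(N+l) * x) / real_of_int (2^(N-i))" by simp
  then have G_eq: "G = F div 2^(N-i)"
    unfolding G_def F_def by (simp only:) (rule floor_divide_real_eq_div, simp)
  have "2^i * x = (2^(i+l) * x) / real_of_int (2^l)" by (simp add: power_add)
  then have floor_eq: "\<lfloor>2^i * x\<rfloor> = G div 2^l"
    unfolding G_def by (simp only:) (rule floor_divide_real_eq_div, simp)
  have "2^l * frac (2^i * x) = 2^(i+l) * x - of_int (2^l * \<lfloor>2^i * x\<rfloor>)"
    by (simp add: frac_def power_add algebra_simps)
  then have "\<lfloor>2^l * frac (2^i * x)\<rfloor> = G - 2^l * (G div 2^l)"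
    unfolding G_def floor_eq by (simp only: floor_diff_of_int)
  also have "\<dots> = G mod 2^l" by (rule minus_mult_div_eq_mod)
  also have "\<dots> = int (orbit_digits N l i (nat F))"
    unfolding orbit_digits_def bit_window_def G_eq using assms
    by (simp add: F_def zdiv_int zmod_int)
  finally show ?thesis unfolding F_def .
qed

lemma abs_diff_less_if_floor_eq:
  fixes a b c :: real
  assumes "c > 0" "\<lfloor>c * a\<rfloor> = \<lfloor>c * b\<rfloor>"
  shows "\<bar>a - b\<bar> < 1 / c"
proof -
  have "of_int \<lfloor>c * a\<rfloor> \<le> c * a" "c * a < of_int \<lfloor>c * a\<rfloor> + 1"
    "of_int \<lfloor>c * b\<rfloor> \<le> c * b" "c * b < of_int \<lfloor>c * b\<rfloor> + 1" by linarith+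
  moreover have "real_of_int \<lfloor>c * a\<rfloor> = real_of_int \<lfloor>c * b\<rfloor>" using assms(2) by simp
  ultimately have "\<bar>c * a - c * b\<bar> < 1" unfolding abs_diff_less_iff by linarith
  then have "c * \<bar>a - b\<bar> < 1" using assms(1) by (simp add: abs_mult flip: right_diff_distrib)
  then show ?thesis using assms(1) by (simp add: field_simps)
qed

lemma mem_dyadic_interval_floor:
  assumes "z \<in> {0..<1}"
  shows "z \<in> dyadic_interval L (nat \<lfloor>2^L * z\<rfloor>)" "nat \<lfloor>2^L * z\<rfloor> < 2^L"
proof -
  have z: "0 \<le> 2^L * z" "2^L * z < 2^L" using assms by auto
  then have "\<lfloor>2^L * z\<rfloor> < 2^L" by (metis floor_less_iff of_int_numeral of_int_power)
  then show "nat \<lfloor>2^L * z\<rfloor> < 2^L" using z by (simp add: nat_less_iff)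
  have "real (nat \<lfloor>2^L * z\<rfloor>) = of_int \<lfloor>2^L * z\<rfloor>" using z by simp
  moreover have "of_int \<lfloor>2^L * z\<rfloor> \<le> 2^L * z" "2^L * z < of_int \<lfloor>2^L * z\<rfloor> + 1" by linarith+
  ultimately show "z \<in> dyadic_interval L (nat \<lfloor>2^L * z\<rfloor>)"
    unfolding dyadic_interval_def by (simp add: field_simps)
qed

lemma close_orbits_if_not_in_unmatched_region:
  assumes "x \<in> {0..<1}" "y \<in> {0..<1}" "(x, y) \<notin> unmatched_region N l"
  shows "\<exists>i<N. \<exists>j<N. \<bar>frac (2^i * x) - frac (2^j * y)\<bar> < 1 / 2^l"
proof -
  define p where "p = nat \<lfloor>2^(N+l) * x\<rfloor>"
  define q where "q = nat \<lfloor>2^(N+l) * y\<rfloor>"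
  have "(x, y) \<in> dyadic_interval (N+l) p \<times> dyadic_interval (N+l) q"
    using mem_dyadic_interval_floor assms(1,2) unfolding p_def q_def by blast
  then have "(p, q) \<notin> unmatched_pairs N l"
    using assms(3) unfolding unmatched_region_def by force
  moreover have "p < 2^(N+l)" "q < 2^(N+l)"
    using mem_dyadic_interval_floor assms(1,2) unfolding p_def q_def by blast+
  ultimately obtain i j where ij: "i < N" "j < N" "orbit_digits N l i p = orbit_digits N l j q"
    unfolding unmatched_pairs_def by auto
  then have "\<lfloor>2^l * frac (2^i * x)\<rfloor> = \<lfloor>2^l * frac (2^j * y)\<rfloor>"
    using floor_frac_eq_orbit_digits[of x i N l] floor_frac_eq_orbit_digits[of y j N l] assms
    unfolding p_def q_def by simp
  then have "\<bar>frac (2^i * x) - frac (2^j * y)\<bar> < 1 / 2^l"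
    by (intro abs_diff_less_if_floor_eq) simp_all
  with ij show ?thesis by blast
qed

text \<open>Every \<open>n \<ge> 2^K\<close> lies in a block \<open>2^k \<le> n < 2^(k+1)\<close> with \<open>k \<ge> K\<close>; the \<open>2^k\<close> first iterates
  already come within \<open>2^-(l k) \<le> r (2^(k+1)) \<le> r n\<close> of each other.\<close>

lemma mem_liminf_E_set_doubling:
  assumes "x \<in> {0..<1}" "y \<in> {0..<1}" "decseq r"
    and "\<And>k. 1 / 2^(l k) \<le> r (2^(k+1))"
    and "eventually (\<lambda>k. (x, y) \<notin> unmatched_region (2^k) (l k)) sequentially"
  shows "(x, y) \<in> (\<Union>N. \<Inter>n\<in>{N..}. E_set doubling n (r n))"
proof -
  obtain K where K: "\<And>k. k \<ge> K \<Longrightarrow> (x, y) \<notin> unmatched_region (2^k) (l k)"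
    using assms(5) unfolding eventually_sequentially by blast
  have "(x, y) \<in> E_set doubling n (r n)" if n: "n \<ge> 2^K" for n
  proof -
    have "n \<ge> 1" using n by (meson le_trans one_le_power one_le_numeral)
    then obtain k where k: "2^k \<le> n" "n < 2^(k+1)" using ex_power_ivl1[of 2 n] by auto
    have "2^K < (2::nat)^(k+1)" using k n by linarith
    then have "K < k + 1" by (rule power_less_imp_less_exp[rotated]) simp
    then have "k \<ge> K" by simp
    then obtain i j where ij: "i < 2^k" "j < 2^k" "\<bar>frac (2^i * x) - frac (2^j * y)\<bar> < 1 / 2^(l k)"
      using close_orbits_if_not_in_unmatched_region[OF assms(1,2) K] by blast
    have "r (2^(k+1)) \<le> r n" using assms(3) k(2) by (simp add: decseq_def)
    then have "\<bar>(doubling ^^ i) x - (doubling ^^ j) y\<bar> < r n"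
      using ij(3) assms(1,2) assms(4)[of k] by (simp add: doubling_funpow)
    moreover have "i < n" "j < n" using ij k by auto
    ultimately show ?thesis unfolding E_set_def using assms(1,2) by auto
  qed
  then show ?thesis by blast
qed

section \<open>The Borel--Cantelli argument\<close>

lemma AE_mu_pair_half_open: "AE z in mu \<Otimes>\<^sub>M mu. z \<in> {0..<1} \<times> {0..<1}"
proof -
  have "{1} \<in> null_sets mu" by (simp add: null_sets_def sets_mu_iff emeasure_mu)
  then have half_open: "AE x in mu. x \<in> {0..<1}"
    by (rule AE_I') (auto simp: space_mu)
  have "{z \<in> space (mu \<Otimes>\<^sub>M mu). z \<in> {0..<1} \<times> {0..<1}} = {0..<1} \<times> {0..<1}"
    by (auto simp: space_pair_measure space_mu)
  moreover have "{0..<1::real} \<in> sets mu" by (auto simp: sets_mu_iff)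
  ultimately have "{z \<in> space (mu \<Otimes>\<^sub>M mu). z \<in> {0..<1} \<times> {0..<1}} \<in> sets (mu \<Otimes>\<^sub>M mu)"
    by simp
  then show ?thesis
    using half_open by (intro pair_sigma_finite.AE_pair_measure[OF pair_sigma_finite_mu]) auto
qed

lemma two_pow_ceiling_log_bounds:
  fixes \<rho> :: real
  assumes "\<rho> > 0"
  shows "1 / 2^(nat \<lceil>log 2 (1 / \<rho>)\<rceil>) \<le> \<rho>" "2^(nat \<lceil>log 2 (1 / \<rho>)\<rceil>) \<le> 1 + 2 / \<rho>"
proof -
  define c where "c = log 2 (1 / \<rho>)"
  define l where "l = nat \<lceil>c\<rceil>"
  have pow_c: "2 powr c = 1 / \<rho>" unfolding c_def using assms by simp
  have pow_l: "(2::real)^l = 2 powr (real l)" by (simp add: powr_realpow)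
  have "c \<le> real l" unfolding l_def by linarith
  then have "1 / \<rho> \<le> 2^l" unfolding pow_l pow_c[symmetric] by simp
  then show "1 / 2^(nat \<lceil>log 2 (1 / \<rho>)\<rceil>) \<le> \<rho>"
    using assms unfolding l_def c_def by (simp add: field_simps)
  have "2^l \<le> 1 + 2 / \<rho>"
  proof (cases "\<lceil>c\<rceil> \<le> 0")
    case True
    then show ?thesis using assms unfolding l_def by simp
  next
    case False
    then have "real l \<le> c + 1" unfolding l_def by linarith
    then have "(2::real)^l \<le> 2 powr (c + 1)" unfolding pow_l by simp
    also have "\<dots> = 2 / \<rho>" using pow_c by (simp add: powr_add)
    finally show ?thesis by simp
  qed
  then show "2^(nat \<lceil>log 2 (1 / \<rho>)\<rceil>) \<le> 1 + 2 / \<rho>" unfolding l_def c_def .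
qed

theorem mainTheorem7:
  fixes r :: "nat \<Rightarrow> real"
  assumes "decseq r"
    and "\<And>n. r n > 0"
    and "summable (\<lambda>n. 1 / (2 ^ (2 * n) * r (2 ^ n)))"
  shows "emeasure (mu \<Otimes>\<^sub>M mu) (\<Union>N. \<Inter>n\<in>{N..}. E_set doubling n (r n)) = 1"
proof -
  interpret P: prob_space "mu \<Otimes>\<^sub>M mu" by (rule prob_space_mu_pair)
  define l where "l k = nat \<lceil>log 2 (1 / r (2^(k+1)))\<rceil>" for k
  have l_bounds: "1 / 2^(l k) \<le> r (2^(k+1))" "2^(l k) \<le> 1 + 2 / r (2^(k+1))" for k
    unfolding l_def by (rule two_pow_ceiling_log_bounds[OF assms(2)])+
  have "AE z in mu \<Otimes>\<^sub>M mu.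
      eventually (\<lambda>k. z \<in> space (mu \<Otimes>\<^sub>M mu) - unmatched_region (2^k) (l k)) sequentially"
    using summable_measure_unmatched_region[OF assms(2,3) l_bounds(2)]
    by (intro borel_cantelli_AE1) (simp_all add: sets_unmatched_region P.emeasure_eq_measure)
  moreover note AE_mu_pair_half_open
  ultimately have "AE z in mu \<Otimes>\<^sub>M mu. z \<in> (\<Union>N. \<Inter>n\<in>{N..}. E_set doubling n (r n))"
  proof eventually_elim
    case (elim z)
    obtain x y where z: "z = (x, y)" by fastforce
    have "eventually (\<lambda>k. (x, y) \<notin> unmatched_region (2^k) (l k)) sequentially"
      using elim(1) unfolding z by (rule eventually_mono) simp
    then show ?case
      using elim(2) unfolding z
      by (intro mem_liminf_E_set_doubling[OF _ _ assms(1) l_bounds(1)]) auto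
  qed
  then show ?thesis
    by (intro P.emeasure_eq_1_AE sets.countable_UN'' sets.countable_INT') (auto intro: sets_E_set_doubling)
qed

end
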